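(* Let $p,q$ be distinct odd primes, $G=\mathrm{Gal}(\mathbb{Q}(\zeta_p)/\mathbb{Q})$ and $\theta=\sum_{\tau\in G}n_\tau\tau\in\mathbb{Z}[G]$. Define the formal power series $$F(T)=\prod_{\tau\in G}(1-\tau(\zeta_p)T)^{n_\tau/q}\in\mathbb{Q}(\zeta_p)[[T]],\qquad (1-\tau(\zeta_p)T)^{n_\tau/q}=\sum_{k\ge0}\binom{n_\tau/q}{k}(-\tau(\zeta_p)T)^k .$$ Then: (a) every coefficient of $F$ is of the form $a/q^s$ with $a\in\mathbb{Z}[\zeta_p]$ and $s\ge0$; (b) $F(T)=\sum_{k\ge0}\frac{a_k}{k!\,q^k}T^k$ with $a_k\in\mathbb{Z}[\zeta_p]$ and $a_k\equiv\bigl(-\sum_{\tau\in G}n_\tau\tau(\zeta_p)\bigr)^k\pmod{q\mathbb{Z}[\zeta_p]}$ for all $k$; (c) for $\sigma\in G$ and $t\in\mathbb{C}$ with $|t|<1$ the series $F^\sigma(t)$ converges; moreover, if $0\le n_\tau\le q$ for all $\tau\in G$, then for every $k\ge0$ $$|F^\sigma(t)-F^\sigma_k(t)|\le\left|\binom{-m}{k+1}\right|\frac{|t|^{k+1}}{(1-|t|)^{m+k+1}},\qquad m=\frac1q\sum_{\tau\in G}n_\tau .$$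
   Context: $\zeta_p=e^{2i\pi/p}$; $\binom{r}{k}=r(r-1)\cdots(r-k+1)/k!$ for rational $r$. $F^\sigma$ is the series obtained by applying $\sigma$ to every coefficient of $F$, and $F^\sigma_k$ is the polynomial formed by the terms of $F^\sigma$ of degree at most $k$. *)

theory Defs
  imports "HOL-Analysis.Analysis" "HOL-Computational_Algebra.Formal_Power_Series"
begin

definition zeta :: "nat \<Rightarrow> complex" where
  "zeta p = cis (2 * pi / real p)"

definition cyc_field :: "nat \<Rightarrow> complex set" where
  "cyc_field p = {x. \<exists>r :: nat \<Rightarrow> rat. x = (\<Sum>i<p. of_rat (r i) * zeta p ^ i)}"

definition cyc_int :: "nat \<Rightarrow> complex set" where
  "cyc_int p = {x. \<exists>c :: nat \<Rightarrow> int. x = (\<Sum>i<p. of_int (c i) * zeta p ^ i)}"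

text \<open>Gal(Q(zeta_p)/Q): field automorphisms of Q(zeta_p), extended by the identity
  outside Q(zeta_p) so that each automorphism is represented by a unique function.\<close>
definition gal_cyc :: "nat \<Rightarrow> (complex \<Rightarrow> complex) set" where
  "gal_cyc p = {\<sigma>. bij_betw \<sigma> (cyc_field p) (cyc_field p)
      \<and> (\<forall>x\<in>cyc_field p. \<forall>y\<in>cyc_field p. \<sigma> (x + y) = \<sigma> x + \<sigma> y \<and> \<sigma> (x * y) = \<sigma> x * \<sigma> y)
      \<and> \<sigma> 1 = 1
      \<and> (\<forall>x. x \<notin> cyc_field p \<longrightarrow> \<sigma> x = x)}"

definition F_series :: "nat \<Rightarrow> nat \<Rightarrow> ((complex \<Rightarrow> complex) \<Rightarrow> int) \<Rightarrow> complex fps" where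
  "F_series p q n = (\<Prod>\<tau>\<in>gal_cyc p.
      Abs_fps (\<lambda>k. ((of_int (n \<tau>) / of_nat q :: complex) gchoose k) * (- \<tau> (zeta p)) ^ k))"

definition fps_conj :: "(complex \<Rightarrow> complex) \<Rightarrow> complex fps \<Rightarrow> complex fps" where
  "fps_conj \<sigma> F = Abs_fps (\<lambda>k. \<sigma> (fps_nth F k))"

end

theory Submission
  imports Defs "HOL-Number_Theory.Cong"
begin

(* Write y_tau = - tau(zeta_p) and r_tau = n_tau / q, so F = prod_tau (1 + y_tau T)^(r_tau).
   The k-th coefficient of (1 + y T)^(n/q) is P_k y^k / (k! q^k) with P_k = prod_(j<k) (n - j q),
   and P_k is congruent to n^k modulo q: up to numerators congruent modulo q, the factor is
   exp (n y T / q). This property is multiplicative, as exp is, which gives (b) with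
   alpha = sum_tau n_tau y_tau. Moreover k! divides q^e P_k for some e, so all coefficients lie
   in Z[zeta_p][1/q], which is (a).
   For (c), each sigma(tau(zeta_p)) is a root of unity, so F^sigma is majorized coefficientwise
   by prod_tau (1 - T)^(-|r_tau|) = (1 - T)^(-m) with m = sum_tau |r_tau|. The tail bound follows
   from the inequality c_m(k + 1 + j) <= c_m(k + 1) c_(m + k + 1)(j) between the coefficients
   c_m(i) = m (m + 1) ... (m + i - 1) / i! of such series. *)

section \<open>Subrings of the complex numbers spanned by powers of \<open>zeta p\<close>\<close>

locale complex_subring =
  fixes R :: "complex set"
  assumes zero_closed [intro, simp]: "0 \<in> R"
    and one_closed [intro, simp]: "1 \<in> R"
    and add_closed [intro]: "a \<in> R \<Longrightarrow> b \<in> R \<Longrightarrow> a + b \<in> R"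
    and mult_closed [intro]: "a \<in> R \<Longrightarrow> b \<in> R \<Longrightarrow> a * b \<in> R"
    and uminus_closed [intro]: "a \<in> R \<Longrightarrow> - a \<in> R"
begin

lemma diff_closed [intro]: "a \<in> R \<Longrightarrow> b \<in> R \<Longrightarrow> a - b \<in> R"
  using add_closed[of a "- b"] by auto

lemma power_closed [intro]: "a \<in> R \<Longrightarrow> a ^ k \<in> R"
  by (induction k) auto

lemma sum_closed [intro]: "(\<And>i. i \<in> A \<Longrightarrow> f i \<in> R) \<Longrightarrow> sum f A \<in> R"
  by (induction A rule: infinite_finite_induct) auto

lemma of_nat_closed [intro, simp]: "of_nat k \<in> R"
  by (induction k) auto

lemma of_int_closed [intro, simp]: "of_int k \<in> R"
  by (cases k rule: int_cases) auto

lemma Ints_subset: "\<int> \<subseteq> R"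
  by (auto elim: Ints_cases)

lemma fps_mult_nth_closed:
  "(\<And>i. fps_nth f i \<in> R) \<Longrightarrow> (\<And>i. fps_nth g i \<in> R) \<Longrightarrow> fps_nth (f * g) k \<in> R"
  unfolding fps_mult_nth by auto

lemma fps_prod_nth_closed:
  "(\<And>\<tau> i. \<tau> \<in> A \<Longrightarrow> fps_nth (f \<tau>) i \<in> R) \<Longrightarrow> fps_nth (\<Prod>\<tau>\<in>A. f \<tau>) k \<in> R"
proof (induction A arbitrary: k rule: infinite_finite_induct)
  case (insert \<tau> A)
  then show ?case
    by (simp add: fps_mult_nth_closed)
qed auto

end

lemma complex_subring_Ints: "complex_subring \<int>"
  by unfold_locales auto

lemma complex_subring_Rats: "complex_subring \<rat>"
  by unfold_locales auto

definition zeta_span :: "complex set \<Rightarrow> nat \<Rightarrow> complex set" where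
  "zeta_span R p = {x. \<exists>c. (\<forall>i. c i \<in> R) \<and> x = (\<Sum>i<p. c i * zeta p ^ i)}"

lemma zeta_span_intro: "(\<And>i. c i \<in> R) \<Longrightarrow> (\<Sum>i<p. c i * zeta p ^ i) \<in> zeta_span R p"
  unfolding zeta_span_def by blast

lemma zeta_span_mono: "R \<subseteq> S \<Longrightarrow> zeta_span R p \<subseteq> zeta_span S p"
  unfolding zeta_span_def by (auto 0 4)

lemma zeta_span_range:
  "zeta_span (range f) p = {x. \<exists>c. x = (\<Sum>i<p. f (c i) * zeta p ^ i)}"
  unfolding zeta_span_def by (auto 0 3 dest!: choice simp: image_iff)

lemma cyc_int_eq_zeta_span: "cyc_int p = zeta_span \<int> p"
  unfolding cyc_int_def Ints_def zeta_span_range ..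

lemma cyc_field_eq_zeta_span: "cyc_field p = zeta_span \<rat> p"
  unfolding cyc_field_def Rats_def zeta_span_range ..

lemma cyc_int_subset_cyc_field: "cyc_int p \<subseteq> cyc_field p"
  unfolding cyc_int_eq_zeta_span cyc_field_eq_zeta_span by (rule zeta_span_mono[OF Ints_subset_Rats])

lemma cis_power: "cis a ^ n = cis (real n * a)"
  by (induction n) (simp_all add: algebra_simps cis_mult)

lemma zeta_power_eq_1: "p > 0 \<Longrightarrow> zeta p ^ p = 1"
  by (simp add: zeta_def cis_power)

context complex_subring
begin

lemma zeta_span_add:
  assumes "x \<in> zeta_span R p" "y \<in> zeta_span R p"
  shows "x + y \<in> zeta_span R p"
proof -
  obtain c d where c: "\<forall>i. c i \<in> R" "x = (\<Sum>i<p. c i * zeta p ^ i)"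
    and d: "\<forall>i. d i \<in> R" "y = (\<Sum>i<p. d i * zeta p ^ i)"
    using assms unfolding zeta_span_def by blast
  have "(\<Sum>i<p. (c i + d i) * zeta p ^ i) \<in> zeta_span R p"
    using c(1) d(1) by (intro zeta_span_intro) auto
  then show ?thesis
    unfolding c(2) d(2) by (simp add: sum.distrib distrib_right)
qed

lemma zeta_span_scale:
  assumes "a \<in> R" "x \<in> zeta_span R p"
  shows "a * x \<in> zeta_span R p"
proof -
  obtain c where c: "\<forall>i. c i \<in> R" "x = (\<Sum>i<p. c i * zeta p ^ i)"
    using assms unfolding zeta_span_def by blast
  have "(\<Sum>i<p. (a * c i) * zeta p ^ i) \<in> zeta_span R p"
    using assms(1) c(1) by (intro zeta_span_intro) auto
  then show ?thesis
    unfolding c(2) by (simp add: sum_distrib_left mult.assoc)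
qed

context
  fixes p :: nat
  assumes p: "p > 0"
begin

lemma subset_zeta_span: "R \<subseteq> zeta_span R p"
proof
  fix a assume "a \<in> R"
  have "(\<Sum>i<p. (if i = 0 then a else 0) * zeta p ^ i) = (\<Sum>i<p. if i = 0 then a else 0)"
    by (intro sum.cong) auto
  also have "\<dots> = a"
    using p by simp
  finally have "(\<Sum>i<p. (if i = 0 then a else 0) * zeta p ^ i) = a" .
  moreover have "(\<Sum>i<p. (if i = 0 then a else 0) * zeta p ^ i) \<in> zeta_span R p"
    using \<open>a \<in> R\<close> by (intro zeta_span_intro) auto
  ultimately show "a \<in> zeta_span R p"
    by simp
qed

lemma zeta_span_mult_zeta:
  assumes "x \<in> zeta_span R p"
  shows "zeta p * x \<in> zeta_span R p"
proof -
  obtain c where c: "\<forall>i. c i \<in> R" "x = (\<Sum>i<p. c i * zeta p ^ i)"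
    using assms unfolding zeta_span_def by blast
  obtain m where m: "p = Suc m"
    using p by (cases p) auto
  define d where "d i = (case i of 0 \<Rightarrow> c m | Suc j \<Rightarrow> c j)" for i
  have "zeta p * x = (\<Sum>i<m. c i * zeta p ^ Suc i) + c m * zeta p ^ p"
    unfolding c(2) m sum_distrib_left by (simp add: mult_ac)
  also have "\<dots> = (\<Sum>i<p. d i * zeta p ^ i)"
    using zeta_power_eq_1[OF p] unfolding m sum.lessThan_Suc_shift by (simp add: d_def)
  finally show ?thesis
    using c(1) by (auto intro: zeta_span_intro simp: d_def split: nat.split)
qed

lemma zeta_span_mult:
  assumes x: "x \<in> zeta_span R p" and y: "y \<in> zeta_span R p"
  shows "x * y \<in> zeta_span R p"
proof -
  obtain c where c: "\<forall>i. c i \<in> R" "x = (\<Sum>i<p. c i * zeta p ^ i)"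
    using x unfolding zeta_span_def by blast
  have zy: "zeta p ^ i * y \<in> zeta_span R p" for i
    by (induction i) (auto simp: y mult.assoc zeta_span_mult_zeta)
  have "finite A \<Longrightarrow> (\<Sum>i\<in>A. c i * (zeta p ^ i * y)) \<in> zeta_span R p" for A
    by (induction A rule: finite_induct)
      (use subset_zeta_span in \<open>auto intro: zeta_span_add zeta_span_scale[OF _ zy] c(1)[rule_format]\<close>)
  then show ?thesis
    unfolding c(2) sum_distrib_right by (simp add: mult.assoc)
qed

lemma complex_subring_zeta_span: "complex_subring (zeta_span R p)"
proof
  show "0 \<in> zeta_span R p" "1 \<in> zeta_span R p"
    using subset_zeta_span by auto
qed (auto intro: zeta_span_add zeta_span_mult zeta_span_scale[of "-1", simplified])

lemma zeta_in_zeta_span: "zeta p \<in> zeta_span R p"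
  using zeta_span_mult_zeta[of 1] subset_zeta_span by auto

end

end

lemma complex_subring_cyc_int: "p > 0 \<Longrightarrow> complex_subring (cyc_int p)"
  unfolding cyc_int_eq_zeta_span
  by (rule complex_subring.complex_subring_zeta_span[OF complex_subring_Ints])

lemma complex_subring_cyc_field: "p > 0 \<Longrightarrow> complex_subring (cyc_field p)"
  unfolding cyc_field_eq_zeta_span
  by (rule complex_subring.complex_subring_zeta_span[OF complex_subring_Rats])

lemma zeta_in_cyc_int: "p > 0 \<Longrightarrow> zeta p \<in> cyc_int p"
  unfolding cyc_int_eq_zeta_span by (rule complex_subring.zeta_in_zeta_span[OF complex_subring_Ints])

lemma Rats_subset_cyc_field: "p > 0 \<Longrightarrow> \<rat> \<subseteq> cyc_field p"
  unfolding cyc_field_eq_zeta_span by (rule complex_subring.subset_zeta_span[OF complex_subring_Rats])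

lemma root_of_unity_in_cyc_int:
  assumes p: "p > 0" and "z ^ p = 1"
  shows "z \<in> cyc_int p"
proof -
  obtain k where "z = cis (2 * pi * real k / real p)"
    using Complex.bij_betw_roots_unity[OF p] \<open>z ^ p = 1\<close> unfolding bij_betw_def by auto
  then have "z = zeta p ^ k"
    by (simp add: zeta_def cis_power field_simps)
  then show ?thesis
    using complex_subring.power_closed[OF complex_subring_cyc_int zeta_in_cyc_int] p by simp
qed

section \<open>Galois automorphisms\<close>

context
  fixes p :: nat and \<sigma> :: "complex \<Rightarrow> complex"
  assumes p: "p > 0" and \<sigma>: "\<sigma> \<in> gal_cyc p"
begin

interpretation K: complex_subring "cyc_field p"
  by (rule complex_subring_cyc_field[OF p])

lemma gal_cyc_add: "x \<in> cyc_field p \<Longrightarrow> y \<in> cyc_field p \<Longrightarrow> \<sigma> (x + y) = \<sigma> x + \<sigma> y"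
  and gal_cyc_mult: "x \<in> cyc_field p \<Longrightarrow> y \<in> cyc_field p \<Longrightarrow> \<sigma> (x * y) = \<sigma> x * \<sigma> y"
  and gal_cyc_one: "\<sigma> 1 = 1"
  using \<sigma> unfolding gal_cyc_def bij_betw_def by blast+

lemma gal_cyc_zero: "\<sigma> 0 = 0"
  using gal_cyc_add[of 0 0] by simp

lemma gal_cyc_uminus: "x \<in> cyc_field p \<Longrightarrow> \<sigma> (- x) = - \<sigma> x"
  using gal_cyc_add[of x "- x"] K.uminus_closed[of x] by (simp add: gal_cyc_zero add_eq_0_iff)

lemma gal_cyc_sum: "(\<And>i. i \<in> A \<Longrightarrow> f i \<in> cyc_field p) \<Longrightarrow> \<sigma> (sum f A) = (\<Sum>i\<in>A. \<sigma> (f i))"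
proof (induction A rule: infinite_finite_induct)
  case (insert i A)
  then have "sum f A \<in> cyc_field p"
    by (intro K.sum_closed) auto
  with insert show ?case
    by (simp add: gal_cyc_add)
qed (auto simp: gal_cyc_zero)

lemma gal_cyc_power: "x \<in> cyc_field p \<Longrightarrow> \<sigma> (x ^ k) = \<sigma> x ^ k"
  by (induction k) (auto simp: gal_cyc_one gal_cyc_mult K.power_closed)

lemma gal_cyc_of_int: "\<sigma> (of_int k) = of_int k"
proof -
  have "\<sigma> (of_nat m) = of_nat m" for m
    by (induction m) (auto simp: gal_cyc_zero gal_cyc_one gal_cyc_add)
  then show ?thesis
    by (cases k rule: int_cases) (auto simp: gal_cyc_uminus simp del: of_nat_Suc)
qed

lemma gal_cyc_Rats:
  assumes "x \<in> \<rat>"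
  shows "\<sigma> x = x"
proof -
  obtain a b :: int where b: "b > 0" and x: "x = of_int a / of_int b"
    using assms by (elim Rats_cases')
  have "of_int b * \<sigma> x = \<sigma> (of_int b * x)"
    using gal_cyc_mult[of "of_int b" x] assms Rats_subset_cyc_field[OF p]
    by (auto simp: gal_cyc_of_int)
  also have "\<dots> = of_int a"
    using b x by (simp add: gal_cyc_of_int)
  finally have "of_int b * \<sigma> x = of_int a" .
  then show "\<sigma> x = x"
    using b by (simp add: x field_simps)
qed

lemma gal_cyc_root_of_unity: "x \<in> cyc_field p \<Longrightarrow> x ^ p = 1 \<Longrightarrow> \<sigma> x ^ p = 1"
  using gal_cyc_power[of x p] by (simp add: gal_cyc_one)

lemma gal_cyc_zeta_power_eq_1: "\<sigma> (zeta p) ^ p = 1"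
  using zeta_in_cyc_int[OF p] cyc_int_subset_cyc_field zeta_power_eq_1[OF p]
  by (auto intro: gal_cyc_root_of_unity)

lemma gal_cyc_zeta_in_cyc_int: "\<sigma> (zeta p) \<in> cyc_int p"
  by (rule root_of_unity_in_cyc_int[OF p gal_cyc_zeta_power_eq_1])

end

lemma norm_gal_cyc_gal_cyc_zeta:
  assumes p: "p > 0" and \<sigma>: "\<sigma> \<in> gal_cyc p" and \<tau>: "\<tau> \<in> gal_cyc p"
  shows "norm (\<sigma> (\<tau> (zeta p))) = 1"
proof -
  have "\<tau> (zeta p) \<in> cyc_field p"
    using gal_cyc_zeta_in_cyc_int[OF p \<tau>] cyc_int_subset_cyc_field by blast
  then have "\<sigma> (\<tau> (zeta p)) ^ p = 1"
    by (rule gal_cyc_root_of_unity[OF p \<sigma> _ gal_cyc_zeta_power_eq_1[OF p \<tau>]])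
  then show ?thesis
    using power_eq_1_iff p by blast
qed

section \<open>Binomial coefficients \<open>n/q choose k\<close>\<close>

definition arith_falling_prod :: "int \<Rightarrow> nat \<Rightarrow> nat \<Rightarrow> int" where
  "arith_falling_prod n d k = (\<Prod>j=0..<k. n - int j * int d)"

lemma gbinomial_of_int_div:
  assumes "d > 0"
  shows "((of_int n / of_nat d :: 'a :: field_char_0) gchoose k)
    = of_int (arith_falling_prod n d k) / (fact k * of_nat d ^ k)"
proof -
  have "(of_int n / of_nat d gchoose k) * fact k * of_nat d ^ k
      = (\<Prod>j=0..<k. of_nat d * (of_int n / of_nat d - of_nat j) :: 'a)"
    by (simp add: gbinomial_mult_fact' prod.distrib)
  also have "\<dots> = of_int (arith_falling_prod n d k)"
    unfolding arith_falling_prod_def of_int_prod using assms by (intro prod.cong) (simp_all add: field_simps)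
  finally show ?thesis
    using assms by (simp add: field_simps)
qed

lemma arith_falling_prod_cong: "[arith_falling_prod n d k = n ^ k] (mod int d)"
proof -
  have "[(\<Prod>j=0..<k. n - int j * int d) = (\<Prod>j=0..<k. n)] (mod int d)"
    by (intro cong_prod) (simp add: cong_iff_dvd_diff)
  then show ?thesis
    by (simp add: arith_falling_prod_def)
qed

text \<open>Write \<open>k! = q ^ a * M\<close> with \<open>q \<nmid> M\<close>.  Modulo \<open>M\<close> the factor \<open>n - j q\<close> is \<open>q (u n - j)\<close>
  for an inverse \<open>u\<close> of \<open>q\<close>, so the product is \<open>q ^ k\<close> times a product of \<open>k\<close> consecutive
  integers, which \<open>k!\<close> divides.\<close>
lemma fact_dvd_prime_power_mult_arith_falling_prod:
  assumes q: "prime q"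
  shows "\<exists>e. fact k dvd int q ^ e * arith_falling_prod n q k"
proof -
  have qi: "prime (int q)"
    using q by simp
  have "(fact k :: int) \<noteq> 0" "\<not> is_unit (int q)"
    using qi not_prime_unit by auto
  then obtain M where M: "(fact k :: int) = int q ^ multiplicity (int q) (fact k) * M" "\<not> int q dvd M"
    by (rule multiplicity_decompose')
  obtain u where u: "[int q * u = 1] (mod M)"
    using cong_solve_coprime_int[OF prime_imp_coprime[OF qi M(2)]] ..
  have "[n - int j * int q = int q * (u * n - int j)] (mod M)" for j
  proof -
    have "[int q * u * n - int j * int q = 1 * n - int j * int q] (mod M)"
      by (intro cong_diff cong_scalar_right u cong_refl)
    then show ?thesis
      by (simp add: algebra_simps cong_sym_eq)
  qed
  then have "[arith_falling_prod n q k = (\<Prod>j=0..<k. int q * (u * n - int j))] (mod M)"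
    unfolding arith_falling_prod_def by (intro cong_prod) auto
  moreover have "M dvd (\<Prod>j=0..<k. int q * (u * n - int j))"
  proof -
    have "M dvd fact k"
      by (subst M(1)) (rule dvd_triv_right)
    also have "fact k dvd (\<Prod>j=0..<k. u * n - int j)"
      by (rule dvdI[OF gbinomial_int_mult_fact[symmetric]])
    finally show ?thesis
      unfolding prod.distrib by (rule dvd_mult)
  qed
  ultimately have "M dvd arith_falling_prod n q k"
    by (simp add: cong_dvd_iff)
  then have "fact k dvd int q ^ multiplicity (int q) (fact k) * arith_falling_prod n q k"
    by (subst M(1)) simp
  then show ?thesis ..
qed

section \<open>The congruences of part (b) and the denominators of part (a)\<close>

definition binomial_series :: "'a :: field_char_0 \<Rightarrow> 'a \<Rightarrow> 'a fps" where
  "binomial_series r y = Abs_fps (\<lambda>k. (r gchoose k) * y ^ k)"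

lemma F_series_eq_prod_binomial_series:
  "F_series p q n = (\<Prod>\<tau>\<in>gal_cyc p. binomial_series (of_int (n \<tau>) / of_nat q) (- \<tau> (zeta p)))"
  unfolding F_series_def binomial_series_def ..

definition cong_in :: "complex set \<Rightarrow> complex \<Rightarrow> complex \<Rightarrow> complex \<Rightarrow> bool" where
  "cong_in R m a b \<longleftrightarrow> (\<exists>c\<in>R. a - b = m * c)"

context complex_subring
begin

lemma cong_in_refl: "m \<in> R \<Longrightarrow> cong_in R m a a"
  unfolding cong_in_def by (intro bexI[of _ 0]) auto

lemma cong_in_mult:
  assumes "cong_in R m a b" "cong_in R m c d" "a \<in> R" "d \<in> R"
  shows "cong_in R m (a * c) (b * d)"
proof -
  obtain e f where ef: "e \<in> R" "a - b = m * e" "f \<in> R" "c - d = m * f"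
    using assms(1,2) unfolding cong_in_def by blast
  then have "a * c - b * d = m * (a * f + e * d)"
    by (simp add: algebra_simps)
  moreover have "a * f + e * d \<in> R"
    using assms ef by auto
  ultimately show ?thesis
    unfolding cong_in_def by blast
qed

lemma cong_in_sum:
  assumes "\<And>i. i \<in> A \<Longrightarrow> cong_in R m (f i) (g i)"
  shows "cong_in R m (\<Sum>i\<in>A. f i) (\<Sum>i\<in>A. g i)"
proof -
  obtain c where "\<And>i. i \<in> A \<Longrightarrow> c i \<in> R \<and> f i - g i = m * c i"
    using assms unfolding cong_in_def by metis
  then have "(\<Sum>i\<in>A. f i) - (\<Sum>i\<in>A. g i) = m * (\<Sum>i\<in>A. c i)" "(\<Sum>i\<in>A. c i) \<in> R"
    by (auto simp: sum_subtractf[symmetric] sum_distrib_left)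
  then show ?thesis
    unfolding cong_in_def by blast
qed

lemma cong_in_of_int:
  assumes "[a = b] (mod m)"
  shows "cong_in R (of_int m) (of_int a) (of_int b)"
proof -
  obtain c where "a - b = m * c"
    using assms unfolding cong_iff_dvd_diff by (elim dvdE)
  then have "of_int a - of_int b = of_int m * (of_int c :: complex)"
    by (metis of_int_diff of_int_mult)
  then show ?thesis
    unfolding cong_in_def by blast
qed

end

lemma fps_mult_nth_divide_fact_power:
  fixes f g :: "'a :: field_char_0 fps"
  assumes c: "c \<noteq> 0"
    and f: "\<And>i. fps_nth f i = A i / (fact i * c ^ i)"
    and g: "\<And>i. fps_nth g i = B i / (fact i * c ^ i)"
  shows "fps_nth (f * g) k = (\<Sum>i=0..k. of_nat (k choose i) * A i * B (k - i)) / (fact k * c ^ k)"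
proof -
  have "fps_nth f i * fps_nth g (k - i) = of_nat (k choose i) * A i * B (k - i) / (fact k * c ^ k)"
    if "i \<le> k" for i
  proof -
    have "(fact k :: 'a) = fact i * fact (k - i) * of_nat (k choose i)"
      using binomial_fact_lemma[OF that] by (metis of_nat_fact of_nat_mult)
    moreover have "c ^ k = c ^ i * c ^ (k - i)"
      using that by (simp flip: power_add)
    ultimately show ?thesis
      unfolding f g using c that by (simp add: field_simps)
  qed
  then show ?thesis
    unfolding fps_mult_nth sum_divide_distrib by (intro sum.cong) auto
qed

text \<open>The coefficients of \<open>f\<close> agree with those of \<open>exp (\<alpha> T / q)\<close> up to numerators that are
  congruent modulo \<open>q\<close>.\<close>
definition hurwitz_cong_exp :: "complex set \<Rightarrow> nat \<Rightarrow> complex fps \<Rightarrow> complex \<Rightarrow> bool" where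
  "hurwitz_cong_exp R q f \<alpha> \<longleftrightarrow> \<alpha> \<in> R \<and>
    (\<forall>k. \<exists>a\<in>R. fps_nth f k = a / (fact k * of_nat q ^ k) \<and> cong_in R (of_nat q) a (\<alpha> ^ k))"

context complex_subring
begin

lemma hurwitz_cong_exp_one: "hurwitz_cong_exp R q 1 0"
  unfolding hurwitz_cong_exp_def
proof (intro conjI allI)
  fix k
  show "\<exists>a\<in>R. fps_nth 1 k = a / (fact k * of_nat q ^ k) \<and> cong_in R (of_nat q) a (0 ^ k)"
    by (intro bexI[of _ "0 ^ k"]) (auto intro: cong_in_refl)
qed simp

lemma hurwitz_cong_exp_mult:
  assumes q: "q > 0" and f: "hurwitz_cong_exp R q f \<alpha>" and g: "hurwitz_cong_exp R q g \<beta>"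
  shows "hurwitz_cong_exp R q (f * g) (\<alpha> + \<beta>)"
proof -
  obtain A where A: "\<And>i. A i \<in> R" "\<And>i. fps_nth f i = A i / (fact i * of_nat q ^ i)"
    "\<And>i. cong_in R (of_nat q) (A i) (\<alpha> ^ i)"
    using f unfolding hurwitz_cong_exp_def by metis
  obtain B where B: "\<And>i. B i \<in> R" "\<And>i. fps_nth g i = B i / (fact i * of_nat q ^ i)"
    "\<And>i. cong_in R (of_nat q) (B i) (\<beta> ^ i)"
    using g unfolding hurwitz_cong_exp_def by metis
  have \<alpha>\<beta>: "\<alpha> \<in> R" "\<beta> \<in> R"
    using f g unfolding hurwitz_cong_exp_def by auto
  have "\<exists>a\<in>R. fps_nth (f * g) k = a / (fact k * of_nat q ^ k) \<and> cong_in R (of_nat q) a ((\<alpha> + \<beta>) ^ k)"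
    for k
  proof (intro bexI conjI)
    show "fps_nth (f * g) k = (\<Sum>i=0..k. of_nat (k choose i) * A i * B (k - i)) / (fact k * of_nat q ^ k)"
      using q by (intro fps_mult_nth_divide_fact_power A(2) B(2)) auto
    have "cong_in R (of_nat q) (of_nat (k choose i) * A i * B (k - i))
        (of_nat (k choose i) * \<alpha> ^ i * \<beta> ^ (k - i))" for i
      using A B \<alpha>\<beta> by (intro cong_in_mult cong_in_refl) auto
    then show "cong_in R (of_nat q) (\<Sum>i=0..k. of_nat (k choose i) * A i * B (k - i)) ((\<alpha> + \<beta>) ^ k)"
      unfolding binomial_ring atLeast0AtMost[symmetric] by (intro cong_in_sum) (simp add: mult_ac)
    show "(\<Sum>i=0..k. of_nat (k choose i) * A i * B (k - i)) \<in> R"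
      by (intro sum_closed mult_closed of_nat_closed A(1) B(1))
  qed
  with \<alpha>\<beta> show ?thesis
    unfolding hurwitz_cong_exp_def by auto
qed

lemma hurwitz_cong_exp_prod:
  assumes "q > 0" "\<And>\<tau>. \<tau> \<in> A \<Longrightarrow> hurwitz_cong_exp R q (f \<tau>) (\<alpha> \<tau>)"
  shows "hurwitz_cong_exp R q (\<Prod>\<tau>\<in>A. f \<tau>) (\<Sum>\<tau>\<in>A. \<alpha> \<tau>)"
  using assms(2)
  by (induction A rule: infinite_finite_induct) (auto intro: hurwitz_cong_exp_one hurwitz_cong_exp_mult[OF assms(1)])

lemma hurwitz_cong_exp_binomial_series:
  assumes q: "q > 0" and y: "y \<in> R"
  shows "hurwitz_cong_exp R q (binomial_series (of_int n / of_nat q) y) (of_int n * y)"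
  unfolding hurwitz_cong_exp_def
proof (intro conjI allI bexI)
  fix k
  show "fps_nth (binomial_series (of_int n / of_nat q) y) k
      = of_int (arith_falling_prod n q k) * y ^ k / (fact k * of_nat q ^ k)"
    unfolding binomial_series_def gbinomial_of_int_div[OF q] by simp
  show "cong_in R (of_nat q) (of_int (arith_falling_prod n q k) * y ^ k) ((of_int n * y) ^ k)"
    unfolding power_mult_distrib using y
    by (intro cong_in_mult cong_in_refl) (auto simp: cong_in_of_int[OF arith_falling_prod_cong, simplified])
  show "of_int (arith_falling_prod n q k) * y ^ k \<in> R"
    using y by auto
qed (use y in auto)

end

definition localize_away :: "complex set \<Rightarrow> nat \<Rightarrow> complex set" where
  "localize_away R q = {a / of_nat q ^ s | a s. a \<in> R}"

lemma localize_away_mono: "R \<subseteq> S \<Longrightarrow> localize_away R q \<subseteq> localize_away S q"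
  unfolding localize_away_def by blast

lemma (in complex_subring) subset_localize_away: "R \<subseteq> localize_away R q"
  unfolding localize_away_def by (force intro: exI[of _ 0])

lemma (in complex_subring) complex_subring_localize_away:
  assumes q: "q > 0"
  shows "complex_subring (localize_away R q)"
proof
  fix x y assume "x \<in> localize_away R q" "y \<in> localize_away R q"
  then obtain a s b t where ab: "a \<in> R" "b \<in> R" "x = a / of_nat q ^ s" "y = b / of_nat q ^ t"
    unfolding localize_away_def by blast
  have "x + y = (a * of_nat q ^ t + b * of_nat q ^ s) / of_nat q ^ (s + t)"
    "x * y = (a * b) / of_nat q ^ (s + t)" "- x = (- a) / of_nat q ^ s"
    using q unfolding ab by (simp_all add: field_simps power_add)
  then show "x + y \<in> localize_away R q" "x * y \<in> localize_away R q" "- x \<in> localize_away R q"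
    using ab unfolding localize_away_def by blast+
qed (use subset_localize_away in auto)

lemma gbinomial_of_int_div_in_localize_away:
  assumes q: "prime q"
  shows "(of_int n / of_nat q gchoose k) \<in> localize_away \<int> q"
proof -
  obtain e where "fact k dvd int q ^ e * arith_falling_prod n q k"
    using fact_dvd_prime_power_mult_arith_falling_prod[OF q] by blast
  then obtain w where w: "int q ^ e * arith_falling_prod n q k = fact k * w"
    by (elim dvdE)
  have "(of_int (int q ^ e * arith_falling_prod n q k) :: complex) = of_int (fact k * w)"
    unfolding w ..
  then have "of_nat q ^ e * of_int (arith_falling_prod n q k) = (fact k * of_int w :: complex)"
    by simp
  then have "(of_int n / of_nat q gchoose k) = (of_int w / of_nat q ^ (e + k) :: complex)"
    using prime_gt_0_nat[OF q]
    by (simp add: gbinomial_of_int_div field_simps power_add)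
  then show ?thesis
    unfolding localize_away_def by (auto intro: Ints_of_int)
qed

lemma (in complex_subring) binomial_series_nth_in_localize_away:
  assumes q: "prime q" and y: "y \<in> R"
  shows "fps_nth (binomial_series (of_int n / of_nat q) y) k \<in> localize_away R q"
proof -
  interpret L: complex_subring "localize_away R q"
    using complex_subring_localize_away prime_gt_0_nat[OF q] by blast
  have "(of_int n / of_nat q gchoose k) \<in> localize_away R q"
    using gbinomial_of_int_div_in_localize_away[OF q] localize_away_mono[OF Ints_subset] by blast
  moreover have "y ^ k \<in> localize_away R q"
    using subset_localize_away y by (intro L.power_closed) auto
  ultimately show ?thesis
    unfolding binomial_series_def by (simp add: L.mult_closed)
qed

section \<open>Majorants for part (c)\<close>

definition neg_binomial_series :: "real \<Rightarrow> real fps" where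
  "neg_binomial_series R = Abs_fps (\<lambda>i. pochhammer R i / fact i)"

lemma neg_binomial_series_nth_gbinomial:
  "fps_nth (neg_binomial_series R) i = (-1) ^ i * ((- R) gchoose i)"
  by (simp add: neg_binomial_series_def gbinomial_pochhammer)

lemma pochhammer_nonneg_real: "(x :: real) \<ge> 0 \<Longrightarrow> pochhammer x n \<ge> 0"
  unfolding pochhammer_prod by (auto intro: prod_nonneg)

lemma neg_binomial_series_nth_nonneg: "R \<ge> 0 \<Longrightarrow> fps_nth (neg_binomial_series R) i \<ge> 0"
  by (simp add: neg_binomial_series_def pochhammer_nonneg_real)

lemma abs_gbinomial_neg:
  assumes "R \<ge> 0"
  shows "\<bar>(- R) gchoose i\<bar> = fps_nth (neg_binomial_series R) i"
proof -
  have "\<bar>(- R) gchoose i\<bar> = \<bar>fps_nth (neg_binomial_series R) i\<bar>"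
    by (simp add: neg_binomial_series_nth_gbinomial abs_mult power_abs)
  then show ?thesis
    using neg_binomial_series_nth_nonneg[OF assms, of i] by simp
qed

lemma neg_binomial_series_zero: "neg_binomial_series 0 = 1"
  by (rule fps_ext) (simp add: neg_binomial_series_nth_gbinomial gbinomial_0_left)

lemma neg_binomial_series_add:
  "neg_binomial_series (a + b) = neg_binomial_series a * neg_binomial_series b"
proof (rule fps_ext)
  fix n
  have "fps_nth (neg_binomial_series a * neg_binomial_series b) n
      = (\<Sum>i=0..n. ((- a) gchoose i) * ((- b) gchoose (n - i))) * (-1) ^ n"
    unfolding fps_mult_nth neg_binomial_series_nth_gbinomial sum_distrib_right
    by (intro sum.cong) (auto simp: power_add[symmetric])
  then show "fps_nth (neg_binomial_series (a + b)) n
      = fps_nth (neg_binomial_series a * neg_binomial_series b) n"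
    by (simp add: gbinomial_Vandermonde neg_binomial_series_nth_gbinomial)
qed

lemma neg_binomial_series_sums:
  assumes "\<bar>x\<bar> < 1"
  shows "(\<lambda>i. fps_nth (neg_binomial_series R) i * x ^ i) sums (1 - x) powr (- R)"
proof -
  have "(\<lambda>i. ((- R) gchoose i) * (- x) ^ i) sums (1 + - x) powr (- R)"
    using assms by (intro gen_binomial_real) simp
  moreover have "((- R) gchoose i) * (- x) ^ i = fps_nth (neg_binomial_series R) i * x ^ i" for i
    unfolding neg_binomial_series_nth_gbinomial power_minus[of x] by simp
  ultimately show ?thesis
    by simp
qed

lemma neg_binomial_series_nth_add_le:
  assumes "R \<ge> 0"
  shows "fps_nth (neg_binomial_series R) (m + j)
    \<le> fps_nth (neg_binomial_series R) m * fps_nth (neg_binomial_series (R + of_nat m)) j"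
proof -
  have "real (fact m * fact j) \<le> fact (m + j)"
    using fact_fact_dvd_fact[of m j] by (metis dvd_imp_le fact_gt_zero of_nat_fact of_nat_le_iff)
  then have "pochhammer R m * pochhammer (R + of_nat m) j / fact (m + j)
      \<le> pochhammer R m * pochhammer (R + of_nat m) j / (fact m * fact j)"
    using assms by (intro divide_left_mono mult_nonneg_nonneg pochhammer_nonneg_real) auto
  then show ?thesis
    by (simp add: neg_binomial_series_def pochhammer_product')
qed

lemma norm_gbinomial_le: "norm (r gchoose i :: complex) \<le> fps_nth (neg_binomial_series (norm r)) i"
proof -
  have "norm (r gchoose i) = (\<Prod>j=0..<i. norm (r - of_nat j)) / fact i"
    by (simp add: gbinomial_prod_rev norm_divide prod_norm)
  also have "\<dots> \<le> (\<Prod>j=0..<i. norm r + of_nat j) / fact i"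
    by (intro divide_right_mono prod_mono conjI norm_ge_zero order_trans[OF norm_triangle_ineq4]) auto
  also have "\<dots> = fps_nth (neg_binomial_series (norm r)) i"
    by (simp add: neg_binomial_series_def pochhammer_prod)
  finally show ?thesis .
qed

lemma norm_binomial_series_nth_le:
  fixes r y :: complex
  assumes "norm y \<le> 1"
  shows "norm (fps_nth (binomial_series r y) i) \<le> fps_nth (neg_binomial_series (norm r)) i"
proof -
  have "norm (fps_nth (binomial_series r y) i) = norm (r gchoose i) * norm y ^ i"
    by (simp add: binomial_series_def norm_mult norm_power)
  also have "\<dots> \<le> norm (r gchoose i)"
    using assms by (intro mult_left_le power_le_one) auto
  finally show ?thesis
    using norm_gbinomial_le by (rule order_trans)
qed

lemma norm_fps_mult_nth_le:
  fixes f g :: "'a :: real_normed_div_algebra fps"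
  assumes "\<And>i. norm (fps_nth f i) \<le> fps_nth F i" "\<And>i. norm (fps_nth g i) \<le> fps_nth G i"
  shows "norm (fps_nth (f * g) n) \<le> fps_nth (F * G) n"
proof -
  have "norm (fps_nth f i * fps_nth g (n - i)) \<le> fps_nth F i * fps_nth G (n - i)" for i
    unfolding norm_mult using assms by (intro mult_mono) (auto intro: order_trans[OF norm_ge_zero])
  then show ?thesis
    unfolding fps_mult_nth by (intro order_trans[OF norm_sum sum_mono])
qed

lemma norm_fps_prod_nth_le_neg_binomial_series:
  assumes "\<And>\<tau> i. \<tau> \<in> A \<Longrightarrow> norm (fps_nth (f \<tau>) i) \<le> fps_nth (neg_binomial_series (R \<tau>)) i"
  shows "norm (fps_nth (\<Prod>\<tau>\<in>A. f \<tau> :: complex fps) n) \<le> fps_nth (neg_binomial_series (\<Sum>\<tau>\<in>A. R \<tau>)) n"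
  using assms
proof (induction A arbitrary: n rule: infinite_finite_induct)
  case (insert \<tau> A)
  then show ?case
    by (simp add: neg_binomial_series_add norm_fps_mult_nth_le)
qed (auto simp: neg_binomial_series_zero)

context
  fixes a :: "nat \<Rightarrow> complex" and t :: complex and R :: real
  assumes majorant: "\<And>i. norm (a i) \<le> fps_nth (neg_binomial_series R) i"
    and t: "norm t < 1"
begin

lemma summable_norm_majorized: "summable (\<lambda>i. norm (a i * t ^ i))"
proof (rule summable_comparison_test')
  show "summable (\<lambda>i. fps_nth (neg_binomial_series R) i * norm t ^ i)"
    using neg_binomial_series_sums[of "norm t" R] t by (auto intro: sums_summable)
  show "norm (norm (a i * t ^ i)) \<le> fps_nth (neg_binomial_series R) i * norm t ^ i" for i
    by (simp add: norm_mult norm_power mult_right_mono majorant)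
qed

lemma summable_majorized: "summable (\<lambda>i. a i * t ^ i)"
  using summable_norm_majorized by (rule summable_norm_cancel)

lemma norm_suminf_minus_partial_sum_majorized_le:
  assumes R: "R \<ge> 0"
  shows "norm ((\<Sum>i. a i * t ^ i) - (\<Sum>i\<le>k. a i * t ^ i))
    \<le> fps_nth (neg_binomial_series R) (k + 1) * norm t ^ (k + 1) / (1 - norm t) powr (R + real k + 1)"
proof -
  define x where "x = norm t"
  define c where "c = fps_nth (neg_binomial_series R) (k + 1) * x ^ (k + 1)"
  define R' where "R' = R + real (k + 1)"
  have x: "\<bar>x\<bar> < 1"
    using t by (simp add: x_def)
  have tail_sums: "(\<lambda>j. c * (fps_nth (neg_binomial_series R') j * x ^ j)) sums (c * (1 - x) powr (- R'))"
    using neg_binomial_series_sums[OF x] by (rule sums_mult)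
  have "(\<Sum>i. a i * t ^ i) - (\<Sum>i\<le>k. a i * t ^ i) = (\<Sum>j. a (j + (k + 1)) * t ^ (j + (k + 1)))"
    using suminf_split_initial_segment[OF summable_majorized, of "k + 1"]
    by (simp add: lessThan_Suc_atMost)
  also have "norm \<dots> \<le> (\<Sum>j. norm (a (j + (k + 1)) * t ^ (j + (k + 1))))"
    using summable_norm_majorized by (intro summable_norm summable_ignore_initial_segment)
  also have "\<dots> \<le> (\<Sum>j. c * (fps_nth (neg_binomial_series R') j * x ^ j))"
  proof (intro suminf_le allI)
    fix j
    have "norm (a (j + (k + 1)) * t ^ (j + (k + 1)))
        \<le> fps_nth (neg_binomial_series R) (k + 1 + j) * x ^ (j + (k + 1))"
      by (simp add: x_def norm_mult norm_power mult_right_mono majorant add.commute)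
    also have "\<dots> \<le> fps_nth (neg_binomial_series R) (k + 1) * fps_nth (neg_binomial_series R') j
        * x ^ (j + (k + 1))"
      using neg_binomial_series_nth_add_le[OF R, of "k + 1" j]
      by (intro mult_right_mono) (simp_all add: R'_def x_def)
    also have "\<dots> = c * (fps_nth (neg_binomial_series R') j * x ^ j)"
      by (simp add: c_def power_add mult_ac)
    finally show "norm (a (j + (k + 1)) * t ^ (j + (k + 1))) \<le> c * (fps_nth (neg_binomial_series R') j * x ^ j)" .
  next
    show "summable (\<lambda>j. norm (a (j + (k + 1)) * t ^ (j + (k + 1))))"
      using summable_ignore_initial_segment[OF summable_norm_majorized] .
    show "summable (\<lambda>j. c * (fps_nth (neg_binomial_series R') j * x ^ j))"
      using tail_sums by (rule sums_summable)
  qed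
  also have "\<dots> = c * (1 - x) powr (- R')"
    using tail_sums by (rule sums_unique[symmetric])
  also have "\<dots> = c / (1 - x) powr (R + real k + 1)"
    unfolding powr_minus_divide by (simp add: R'_def add_ac)
  finally show ?thesis
    by (simp add: c_def x_def)
qed

end

section \<open>Conjugate series\<close>

lemma gbinomial_Rats:
  assumes "(r :: complex) \<in> \<rat>"
  shows "(r gchoose k) \<in> \<rat>"
proof -
  have "(fact k :: complex) \<in> \<rat>"
    using Rats_of_nat[of "fact k"] by simp
  then show ?thesis
    unfolding gbinomial_prod_rev using assms by (intro Rats_divide Rats_prod Rats_diff) auto
qed

lemma binomial_series_nth_in_cyc_field:
  assumes p: "p > 0" and "r \<in> \<rat>" "y \<in> cyc_field p"
  shows "fps_nth (binomial_series r y) k \<in> cyc_field p"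
proof -
  interpret K: complex_subring "cyc_field p"
    by (rule complex_subring_cyc_field[OF p])
  show ?thesis
    unfolding binomial_series_def
    using assms gbinomial_Rats Rats_subset_cyc_field[OF p] by auto
qed

context
  fixes p :: nat and \<sigma> :: "complex \<Rightarrow> complex"
  assumes p: "p > 0" and \<sigma>: "\<sigma> \<in> gal_cyc p"
begin

lemma fps_conj_one: "fps_conj \<sigma> 1 = 1"
  by (rule fps_ext) (simp add: fps_conj_def gal_cyc_one[OF p \<sigma>] gal_cyc_zero[OF p \<sigma>])

lemma fps_conj_mult:
  assumes f: "\<And>i. fps_nth f i \<in> cyc_field p" and g: "\<And>i. fps_nth g i \<in> cyc_field p"
  shows "fps_conj \<sigma> (f * g) = fps_conj \<sigma> f * fps_conj \<sigma> g"
proof (rule fps_ext)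
  interpret K: complex_subring "cyc_field p"
    by (rule complex_subring_cyc_field[OF p])
  fix k
  have "\<sigma> (\<Sum>i=0..k. fps_nth f i * fps_nth g (k - i)) = (\<Sum>i=0..k. \<sigma> (fps_nth f i) * \<sigma> (fps_nth g (k - i)))"
    using f g by (simp add: gal_cyc_sum[OF p \<sigma>] gal_cyc_mult[OF p \<sigma>] K.mult_closed)
  then show "fps_nth (fps_conj \<sigma> (f * g)) k = fps_nth (fps_conj \<sigma> f * fps_conj \<sigma> g) k"
    by (simp add: fps_conj_def fps_mult_nth)
qed

lemma fps_conj_prod:
  assumes "\<And>\<tau> i. \<tau> \<in> A \<Longrightarrow> fps_nth (f \<tau>) i \<in> cyc_field p"
  shows "fps_conj \<sigma> (\<Prod>\<tau>\<in>A. f \<tau>) = (\<Prod>\<tau>\<in>A. fps_conj \<sigma> (f \<tau>))"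
  using assms
proof (induction A rule: infinite_finite_induct)
  case (insert \<tau> A)
  have "fps_nth (\<Prod>\<tau>\<in>A. f \<tau>) i \<in> cyc_field p" for i
    using insert.prems by (intro complex_subring.fps_prod_nth_closed[OF complex_subring_cyc_field[OF p]]) auto
  with insert show ?case
    by (simp add: fps_conj_mult)
qed (simp_all add: fps_conj_one)

lemma fps_conj_binomial_series:
  assumes r: "r \<in> \<rat>" and y: "y \<in> cyc_field p"
  shows "fps_conj \<sigma> (binomial_series r y) = binomial_series r (\<sigma> y)"
proof (rule fps_ext)
  fix k
  have "r gchoose k \<in> cyc_field p"
    using gbinomial_Rats[OF r] Rats_subset_cyc_field[OF p] by blast
  moreover have "y ^ k \<in> cyc_field p"
    using complex_subring.power_closed[OF complex_subring_cyc_field[OF p] y] .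
  ultimately have "\<sigma> ((r gchoose k) * y ^ k) = (r gchoose k) * \<sigma> y ^ k"
    using gbinomial_Rats[OF r] y
    by (simp add: gal_cyc_mult[OF p \<sigma>] gal_cyc_power[OF p \<sigma>] gal_cyc_Rats[OF p \<sigma>])
  then show "fps_nth (fps_conj \<sigma> (binomial_series r y)) k = fps_nth (binomial_series r (\<sigma> y)) k"
    by (simp add: fps_conj_def binomial_series_def)
qed

end

lemma fps_conj_F_series:
  assumes p: "p > 0" and \<sigma>: "\<sigma> \<in> gal_cyc p"
  shows "fps_conj \<sigma> (F_series p q n)
    = (\<Prod>\<tau>\<in>gal_cyc p. binomial_series (of_int (n \<tau>) / of_nat q) (- \<sigma> (\<tau> (zeta p))))"
proof -
  have \<tau>\<zeta>: "\<tau> (zeta p) \<in> cyc_field p" if "\<tau> \<in> gal_cyc p" for \<tau>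
    using gal_cyc_zeta_in_cyc_int[OF p that] cyc_int_subset_cyc_field by blast
  then have "- \<tau> (zeta p) \<in> cyc_field p" if "\<tau> \<in> gal_cyc p" for \<tau>
    using complex_subring.uminus_closed[OF complex_subring_cyc_field[OF p]] that by blast
  moreover have r: "of_int (n \<tau>) / of_nat q \<in> \<rat>" for \<tau>
    by simp
  ultimately show ?thesis
    unfolding F_series_eq_prod_binomial_series
    by (simp add: fps_conj_prod[OF p \<sigma>] binomial_series_nth_in_cyc_field[OF p]
        fps_conj_binomial_series[OF p \<sigma>] gal_cyc_uminus[OF p \<sigma>] \<tau>\<zeta>)
qed

lemma norm_fps_conj_F_series_nth_le:
  assumes p: "p > 0" and \<sigma>: "\<sigma> \<in> gal_cyc p"
  shows "norm (fps_nth (fps_conj \<sigma> (F_series p q n)) i)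
    \<le> fps_nth (neg_binomial_series (\<Sum>\<tau>\<in>gal_cyc p. \<bar>real_of_int (n \<tau>)\<bar> / real q)) i"
  unfolding fps_conj_F_series[OF p \<sigma>]
proof (rule norm_fps_prod_nth_le_neg_binomial_series)
  fix \<tau> i assume \<tau>: "\<tau> \<in> gal_cyc p"
  have "norm (of_int (n \<tau>) / of_nat q :: complex) = \<bar>real_of_int (n \<tau>)\<bar> / real q"
    by (simp add: norm_divide)
  then show "norm (fps_nth (binomial_series (of_int (n \<tau>) / of_nat q) (- \<sigma> (\<tau> (zeta p)))) i)
      \<le> fps_nth (neg_binomial_series (\<bar>real_of_int (n \<tau>)\<bar> / real q)) i"
    using norm_binomial_series_nth_le[of "- \<sigma> (\<tau> (zeta p))" "of_int (n \<tau>) / of_nat q" i]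
      norm_gal_cyc_gal_cyc_zeta[OF p \<sigma> \<tau>] by simp
qed

lemma F_series_nth_in_localize_away:
  assumes p: "p > 0" and q: "prime q"
  shows "fps_nth (F_series p q n) k \<in> localize_away (cyc_int p) q"
proof -
  interpret Z: complex_subring "cyc_int p"
    by (rule complex_subring_cyc_int[OF p])
  show ?thesis
    unfolding F_series_eq_prod_binomial_series
    using gal_cyc_zeta_in_cyc_int[OF p] prime_gt_0_nat[OF q]
    by (intro complex_subring.fps_prod_nth_closed[OF Z.complex_subring_localize_away]
        Z.binomial_series_nth_in_localize_away q) auto
qed

lemma hurwitz_cong_exp_F_series:
  assumes p: "p > 0" and q: "q > 0"
  shows "hurwitz_cong_exp (cyc_int p) q (F_series p q n)
    (- (\<Sum>\<tau>\<in>gal_cyc p. of_int (n \<tau>) * \<tau> (zeta p)))"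
proof -
  interpret Z: complex_subring "cyc_int p"
    by (rule complex_subring_cyc_int[OF p])
  have "hurwitz_cong_exp (cyc_int p) q (F_series p q n) (\<Sum>\<tau>\<in>gal_cyc p. of_int (n \<tau>) * - \<tau> (zeta p))"
    unfolding F_series_eq_prod_binomial_series using gal_cyc_zeta_in_cyc_int[OF p]
    by (intro Z.hurwitz_cong_exp_prod Z.hurwitz_cong_exp_binomial_series q) auto
  then show ?thesis
    by (simp add: sum_negf)
qed

lemma summable_fps_conj_F_series:
  assumes "p > 0" "\<sigma> \<in> gal_cyc p" "norm t < 1"
  shows "summable (\<lambda>k. fps_nth (fps_conj \<sigma> (F_series p q n)) k * t ^ k)"
  by (rule summable_majorized[OF norm_fps_conj_F_series_nth_le[OF assms(1,2)] assms(3)])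

lemma norm_fps_conj_F_series_tail_le:
  fixes p q :: nat and n :: "(complex \<Rightarrow> complex) \<Rightarrow> int" and t :: complex
  assumes p: "p > 0" and \<sigma>: "\<sigma> \<in> gal_cyc p" and t: "norm t < 1"
    and n: "\<And>\<tau>. \<tau> \<in> gal_cyc p \<Longrightarrow> n \<tau> \<ge> 0"
  defines "G \<equiv> fps_conj \<sigma> (F_series p q n)" and "m \<equiv> (\<Sum>\<tau>\<in>gal_cyc p. real_of_int (n \<tau>)) / real q"
  shows "norm ((\<Sum>i. fps_nth G i * t ^ i) - (\<Sum>i\<le>k. fps_nth G i * t ^ i))
    \<le> \<bar>(- m) gchoose (k + 1)\<bar> * norm t ^ (k + 1) / (1 - norm t) powr (m + real k + 1)"
proof -
  have m: "m = (\<Sum>\<tau>\<in>gal_cyc p. \<bar>real_of_int (n \<tau>)\<bar> / real q)"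
    unfolding m_def sum_divide_distrib using n by (intro sum.cong) auto
  have "m \<ge> 0"
    unfolding m by (auto intro: sum_nonneg)
  show ?thesis
    unfolding G_def abs_gbinomial_neg[OF \<open>m \<ge> 0\<close>]
    by (rule norm_suminf_minus_partial_sum_majorized_le[OF
          norm_fps_conj_F_series_nth_le[OF p \<sigma>, of q n, folded m] t \<open>m \<ge> 0\<close>])
qed

theorem proposition3:
  fixes p q :: nat and n :: "(complex \<Rightarrow> complex) \<Rightarrow> int"
  assumes "prime p" "prime q" "odd p" "odd q" "p \<noteq> q"
  defines "F \<equiv> F_series p q n"
  shows "(\<forall>k. \<exists>a\<in>cyc_int p. \<exists>s::nat. fps_nth F k = a / of_nat q ^ s)
    \<and> (\<forall>k. \<exists>a\<in>cyc_int p. fps_nth F k = a / (fact k * of_nat q ^ k) \<and>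
            (\<exists>b\<in>cyc_int p. a - (- (\<Sum>\<tau>\<in>gal_cyc p. of_int (n \<tau>) * \<tau> (zeta p))) ^ k
                              = of_nat q * b))
    \<and> (\<forall>\<sigma>\<in>gal_cyc p. \<forall>t. norm t < 1 \<longrightarrow>
            summable (\<lambda>k. fps_nth (fps_conj \<sigma> F) k * t ^ k))
    \<and> ((\<forall>\<tau>\<in>gal_cyc p. 0 \<le> n \<tau> \<and> n \<tau> \<le> int q) \<longrightarrow>
          (\<forall>\<sigma>\<in>gal_cyc p. \<forall>t. \<forall>k::nat. norm t < 1 \<longrightarrow>
            norm ((\<Sum>i. fps_nth (fps_conj \<sigma> F) i * t ^ i)
                  - (\<Sum>i\<le>k. fps_nth (fps_conj \<sigma> F) i * t ^ i))
            \<le> \<bar>(- ((\<Sum>\<tau>\<in>gal_cyc p. real_of_int (n \<tau>)) / real q)) gchoose (k + 1)\<bar>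
               * norm t ^ (k + 1)
               / (1 - norm t) powr ((\<Sum>\<tau>\<in>gal_cyc p. real_of_int (n \<tau>)) / real q + real k + 1)))"
proof -
  have p: "p > 0" and q: "q > 0"
    using assms(1,2) prime_gt_0_nat by blast+
  have a: "\<forall>k. \<exists>a\<in>cyc_int p. \<exists>s::nat. fps_nth F k = a / of_nat q ^ s"
    using F_series_nth_in_localize_away[OF p assms(2)] unfolding F_def localize_away_def by blast
  have b: "\<forall>k. \<exists>a\<in>cyc_int p. fps_nth F k = a / (fact k * of_nat q ^ k) \<and>
      (\<exists>b\<in>cyc_int p. a - (- (\<Sum>\<tau>\<in>gal_cyc p. of_int (n \<tau>) * \<tau> (zeta p))) ^ k = of_nat q * b)"
    using hurwitz_cong_exp_F_series[OF p q] unfolding F_def hurwitz_cong_exp_def cong_in_def by blast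
  show ?thesis
    unfolding F_def
    by (intro conjI a[unfolded F_def] b[unfolded F_def] ballI allI impI summable_fps_conj_F_series[OF p]
        norm_fps_conj_F_series_tail_le[OF p]) auto
qed

end
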